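(* Let $\mathcal{X}=\mathcal{UD}(\chi,T',\theta)$ be the crystal on $\mathbb{Z}^6$ obtained by ultra-discretizing the positive geometric crystal $\chi$ of type $G_2^{(1)}$ described in the context, and let $B_\infty$ be the $D_4^{(3)}$-crystal described in the context. Then $\mathcal{X}$ is isomorphic to $B_\infty$ as a crystal, i.e. there is a bijection $\Omega:\mathcal{X}\to B_\infty$ such that $\Omega\circ\tilde e_i=\tilde e_i\circ\Omega$, $\Omega\circ\tilde f_i=\tilde f_i\circ\Omega$, $\varepsilon_i\circ\Omega=\varepsilon_i$ and $\varphi_i\circ\Omega=\varphi_i$ (hence also $\mathrm{wt}_i\circ\Omega=\mathrm{wt}_i$) for all $i\in\{0,1,2\}$.
   Context: Index set $I=\{0,1,2\}$. The affine Lie algebra $\mathfrak g$ of type $G_2^{(1)}$ has Cartan matrix $(a_{ij})_{i,j=0,1,2}$ with rows $(2,-1,0),(-1,2,-1),(0,-3,2)$; its Langlands dual is of type $D_4^{(3)}$, whose Cartan matrix has rows $(2,-1,0),(-1,2,-3),(0,-1,2)$. The geometric crystal $\chi$. Its underlying variety is the algebraic torus $T'=(\mathbb C^\times)^6$ with coordinates $x=(x_0,\dots,x_5)$ (realized in the paper, via the positive structure $\theta$, as $\{Y_0(x_0)Y_1(x_1)Y_2(x_2)Y_1(x_3)Y_2(x_4)Y_1(x_5)v\}$ inside the 15-dimensional fundamental representation $W(\varpi_1)$ of $G_2^{(1)}$, $v$ a highest vector; in the coordinates $x$ the structure is as follows). For $c\in\mathbb C^\times$: $i=1$: put $a=\frac{x_0}{x_1}$,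 $b=\frac{x_0x_2^3}{x_1^2x_3}$, $d=\frac{x_0x_2^3x_4^3}{x_1^2x_3^2x_5}$. Then $e_1^c(x)=(x_0,\mathcal C_1x_1,x_2,\mathcal C_3x_3,x_4,\mathcal C_5x_5)$ with $\mathcal C_1=\frac{ca+b+d}{a+b+d}$, $\mathcal C_3=\frac{ca+cb+d}{ca+b+d}$, $\mathcal C_5=\frac{c(a+b+d)}{ca+cb+d}$; $\varepsilon_1(x)=a+b+d$; $\gamma_1(x)=\frac{x_1^2x_3^2x_5^2}{x_0x_2^3x_4^3}$. $i=2$: put $p=\frac{x_1}{x_2}$, $q=\frac{x_1x_3}{x_2^2x_4}$. Then $e_2^c(x)=(x_0,x_1,\mathcal C_2x_2,x_3,\mathcal C_4x_4,x_5)$ with $\mathcal C_2=\frac{cp+q}{p+q}$, $\mathcal C_4=\frac{c(p+q)}{cp+q}$; $\varepsilon_2(x)=p+q$; $\gamma_2(x)=\frac{x_2^2x_4^2}{x_1x_3x_5}$. $i=0$: put $D=c^2x_0^2x_2^3x_3+x_1x_2^3x_3^2x_5+cx_0\big(x_1x_3^3+3x_1x_2x_3^2x_4+3x_1x_2^2x_3x_4^2+x_2^3(x_3^2+x_1x_4^3+x_1x_3x_5)\big)$, $E=x_0^2x_2^3x_3+x_1x_2^3x_3^2x_5+x_0\big(x_1x_3^3+3x_1x_2x_3^2x_4+3x_1x_2^2x_3x_4^2+x_2^3(x_3^2+x_1x_4^3+x_1x_3x_5)\big)$, $F=cx_0^2x_2^3x_3+x_1x_2^3x_3^2x_5+x_0\big(cx_1x_3^3+3cx_1x_2x_3^2x_4+3cx_1x_2^2x_3x_4^2+x_2^3(x_3^2+cx_1x_4^3+cx_1x_3x_5)\big)$,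 $G=cx_0^2x_2^3x_3+x_1x_2^3x_3^2x_5+x_0\big(x_1x_3^3+(2+c)x_1x_2x_3^2x_4+(1+2c)x_1x_2^2x_3x_4^2+x_2^3(x_3^2+cx_1x_4^3+cx_1x_3x_5)\big)$, $H=cx_0^2x_2^3x_3+x_1x_2^3x_3^2x_5+x_0\big(x_1x_3^3+3x_1x_2x_3^2x_4+3x_1x_2^2x_3x_4^2+x_2^3(x_3^2+x_1x_4^3+cx_1x_3x_5)\big)$. Then $e_0^c(x)=\big(\frac{D}{cE}x_0,\frac{F}{cE}x_1,\frac{G}{cE}x_2,\frac{DH}{c^2EF}x_3,\frac{D}{cG}x_4,\frac{D}{cH}x_5\big)$, $\varepsilon_0(x)=\frac{E}{x_0^3x_2^3x_3}$, $\gamma_0(x)=\frac{x_0^2}{x_1x_3x_5}$. All these are ratios of polynomials with positive coefficients (positive structure). Ultra-discretization. For a rational function $f(c,x)=g/h$ with $g,h$ polynomials in $c,x_0,\dots,x_5$ with positive coefficients, and $(k,n)\in\mathbb Z\times\mathbb Z^6$, set $\mathcal{UD}(f)(k,n)=\deg_t f(t^k,t^{n_0},\dots,t^{n_5})$, the degree (order of pole at $t=\infty$) in the variable $t$; equivalently $\max$ over monomials of $g$ of the linear form given by the exponents, minus the same for $h$. The crystal $\mathcal X=\mathcal{UD}(\chi,T',\theta)$ has underlying set $\mathbb Z^6\ni n=(n_0,\dots,n_5)$ and: if $e_i^c(x)=(x_0R_0(c,x),\dots,x_5R_5(c,x))$, then $\tilde e_i(n)=(n_j+\mathcal{UD}(R_j)(1,n))_{j=0}^5$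 and $\tilde f_i(n)=(n_j+\mathcal{UD}(R_j)(-1,n))_{j=0}^5$; $\mathrm{wt}_i(n)=\mathcal{UD}(\gamma_i)(n)$, $\varepsilon_i(n)=\mathcal{UD}(\varepsilon_i)(n)$, $\varphi_i(n)=\varepsilon_i(n)+\mathrm{wt}_i(n)$. The crystal $B_\infty$ of type $D_4^{(3)}$. Its underlying set is $\{b=(b_1,b_2,b_3,\bar b_3,\bar b_2,\bar b_1)\in\mathbb Z^6: b_3\equiv\bar b_3 \pmod 2\}$. Write $(y)_+=\max(y,0)$. Set $s(b)=b_1+b_2+\frac{b_3+\bar b_3}{2}+\bar b_2+\bar b_1$, $z_1=\bar b_1-b_1$, $z_2=\bar b_2-\bar b_3$, $z_3=b_3-b_2$, $z_4=(\bar b_3-b_3)/2$, and $\max A=\max(0,z_1,z_1+z_2,z_1+z_2+3z_4,z_1+z_2+z_3+3z_4,2z_1+z_2+z_3+3z_4)$. Then $\varepsilon_1(b)=\bar b_1+(\bar b_3-\bar b_2+(b_2-b_3)_+)_+$, $\varphi_1(b)=b_1+(b_3-b_2+(\bar b_2-\bar b_3)_+)_+$; $\varepsilon_2(b)=\bar b_2+\frac12(b_3-\bar b_3)_+$, $\varphi_2(b)=b_2+\frac12(\bar b_3-b_3)_+$; $\varepsilon_0(b)=-s(b)+\max A-(2z_1+z_2+z_3+3z_4)$, $\varphi_0(b)=-s(b)+\max A$; $\mathrm{wt}_i=\varphi_i-\varepsilon_i$. $\tilde e_1b$ equals: $(\dots,\bar b_2+1,\bar b_1-1)$ if $\bar b_2-\bar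 b_3\ge(b_2-b_3)_+$; $(\dots,b_3+1,\bar b_3-1,\dots)$ if $\bar b_2-\bar b_3<0\le b_3-b_2$; $(b_1+1,b_2-1,\dots)$ if $(\bar b_2-\bar b_3)_+<b_2-b_3$. $\tilde f_1b$ equals: $(b_1-1,b_2+1,\dots)$ if $(\bar b_2-\bar b_3)_+\le b_2-b_3$; $(\dots,b_3-1,\bar b_3+1,\dots)$ if $\bar b_2-\bar b_3\le0<b_3-b_2$; $(\dots,\bar b_2-1,\bar b_1+1)$ if $\bar b_2-\bar b_3>(b_2-b_3)_+$. $\tilde e_2b$ equals $(\dots,\bar b_3+2,\bar b_2-1,\dots)$ if $\bar b_3\ge b_3$, and $(\dots,b_2+1,b_3-2,\dots)$ if $\bar b_3<b_3$. $\tilde f_2b$ equals $(\dots,b_2-1,b_3+2,\dots)$ if $\bar b_3\le b_3$, and $(\dots,\bar b_3-2,\bar b_2+1,\dots)$ if $\bar b_3>b_3$. (Here "$\dots$" means the unlisted coordinates are unchanged.) For $\tilde e_0$ consider the conditions $(E_1)$: $z_1+z_2+z_3+3z_4<0$, $z_1+z_2+3z_4<0$, $z_1+z_2<0$, $z_1<0$; $(E_2)$: $z_1+z_2+z_3+3z_4<0$, $z_2+3z_4<0$, $z_2<0$, $z_1\ge0$; $(E_3)$: $z_1+z_3+3z_4<0$, $z_3+3z_4<0$, $z_4<0$, $z_2\ge0$, $z_1+z_2\ge0$; $(E_4)$: $z_1+z_2+3z_4\ge0$, $z_2+3z_4\ge0$, $z_4\ge0$, $z_3<0$, $z_1+z_3<0$;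 $(E_5)$: $z_1+z_2+z_3+3z_4\ge0$, $z_3+3z_4\ge0$, $z_3\ge0$, $z_1<0$; $(E_6)$: $z_1+z_2+z_3+3z_4\ge0$, $z_1+z_3+3z_4\ge0$, $z_1+z_3\ge0$, $z_1\ge0$; and let $(F_j)$ be $(E_j)$ with $\ge$ replaced by $>$ and $<$ replaced by $\le$. Then $\tilde e_0b$ equals, under $(E_1)$ through $(E_6)$ respectively: $(b_1-1,\dots)$; $(\dots,b_3-1,\bar b_3-1,\dots,\bar b_1+1)$; $(\dots,b_3-2,\dots,\bar b_2+1,\dots)$; $(\dots,b_2-1,\dots,\bar b_3+2,\dots)$; $(b_1-1,\dots,b_3+1,\bar b_3+1,\dots)$; $(\dots,\bar b_1+1)$. And $\tilde f_0b$ equals, under $(F_1)$ through $(F_6)$ respectively: $(b_1+1,\dots)$; $(\dots,b_3+1,\bar b_3+1,\dots,\bar b_1-1)$; $(\dots,b_3+2,\dots,\bar b_2-1,\dots)$; $(\dots,b_2+1,\dots,\bar b_3-2,\dots)$; $(b_1+1,\dots,b_3-1,\bar b_3-1,\dots)$; $(\dots,\bar b_1-1)$. $B_\infty$ is the limit of the coherent family of perfect crystals of type $D_4^{(3)}$. *)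

theory Defs
  imports Complex_Main
begin

text \<open>A positive rational function f(c,x) is given as a real function of c and
x = (x 0, ..., x 5).\<close>

definition UD :: "(real \<Rightarrow> (nat \<Rightarrow> real) \<Rightarrow> real) \<Rightarrow> int \<Rightarrow> int list \<Rightarrow> int" where
  "UD f k n = (THE d::int. \<exists>L::real. L \<noteq> 0 \<and>
      ((\<lambda>t::real. f (t powi k) (\<lambda>j. t powi (n ! j)) / t powi d) \<longlongrightarrow> L) at_top)"

definition polyD :: "real \<Rightarrow> (nat \<Rightarrow> real) \<Rightarrow> real" where
  "polyD c x = c^2 * x 0^2 * x 2^3 * x 3 + x 1 * x 2^3 * x 3^2 * x 5
     + c * x 0 * (x 1 * x 3^3 + 3 * x 1 * x 2 * x 3^2 * x 4 + 3 * x 1 * x 2^2 * x 3 * x 4^2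
        + x 2^3 * (x 3^2 + x 1 * x 4^3 + x 1 * x 3 * x 5))"

definition polyE :: "real \<Rightarrow> (nat \<Rightarrow> real) \<Rightarrow> real" where
  "polyE c x = x 0^2 * x 2^3 * x 3 + x 1 * x 2^3 * x 3^2 * x 5
     + x 0 * (x 1 * x 3^3 + 3 * x 1 * x 2 * x 3^2 * x 4 + 3 * x 1 * x 2^2 * x 3 * x 4^2
        + x 2^3 * (x 3^2 + x 1 * x 4^3 + x 1 * x 3 * x 5))"

definition polyF :: "real \<Rightarrow> (nat \<Rightarrow> real) \<Rightarrow> real" where
  "polyF c x = c * x 0^2 * x 2^3 * x 3 + x 1 * x 2^3 * x 3^2 * x 5
     + x 0 * (c * x 1 * x 3^3 + 3 * c * x 1 * x 2 * x 3^2 * x 4 + 3 * c * x 1 * x 2^2 * x 3 * x 4^2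
        + x 2^3 * (x 3^2 + c * x 1 * x 4^3 + c * x 1 * x 3 * x 5))"

definition polyG :: "real \<Rightarrow> (nat \<Rightarrow> real) \<Rightarrow> real" where
  "polyG c x = c * x 0^2 * x 2^3 * x 3 + x 1 * x 2^3 * x 3^2 * x 5
     + x 0 * (x 1 * x 3^3 + (2 + c) * x 1 * x 2 * x 3^2 * x 4 + (1 + 2 * c) * x 1 * x 2^2 * x 3 * x 4^2
        + x 2^3 * (x 3^2 + c * x 1 * x 4^3 + c * x 1 * x 3 * x 5))"

definition polyH :: "real \<Rightarrow> (nat \<Rightarrow> real) \<Rightarrow> real" where
  "polyH c x = c * x 0^2 * x 2^3 * x 3 + x 1 * x 2^3 * x 3^2 * x 5
     + x 0 * (x 1 * x 3^3 + 3 * x 1 * x 2 * x 3^2 * x 4 + 3 * x 1 * x 2^2 * x 3 * x 4^2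
        + x 2^3 * (x 3^2 + x 1 * x 4^3 + c * x 1 * x 3 * x 5))"

text \<open>The factors R_j with e_i^c(x) = (x_0 R_0(c,x), ..., x_5 R_5(c,x)).\<close>

definition geoR :: "nat \<Rightarrow> nat \<Rightarrow> real \<Rightarrow> (nat \<Rightarrow> real) \<Rightarrow> real" where
  "geoR i j c x =
    (if i = 1 then
       (let a = x 0 / x 1;
            b = x 0 * x 2^3 / (x 1^2 * x 3);
            d = x 0 * x 2^3 * x 4^3 / (x 1^2 * x 3^2 * x 5)
        in if j = 1 then (c*a + b + d) / (a + b + d)
           else if j = 3 then (c*a + c*b + d) / (c*a + b + d)
           else if j = 5 then c * (a + b + d) / (c*a + c*b + d)
           else 1)
     else if i = 2 then
       (let p = x 1 / x 2;
            q = x 1 * x 3 / (x 2^2 * x 4)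
        in if j = 2 then (c*p + q) / (p + q)
           else if j = 4 then c * (p + q) / (c*p + q)
           else 1)
     else if i = 0 then
       (if j = 0 then polyD c x / (c * polyE c x)
        else if j = 1 then polyF c x / (c * polyE c x)
        else if j = 2 then polyG c x / (c * polyE c x)
        else if j = 3 then polyD c x * polyH c x / (c^2 * polyE c x * polyF c x)
        else if j = 4 then polyD c x / (c * polyG c x)
        else if j = 5 then polyD c x / (c * polyH c x)
        else 1)
     else 1)"

definition geoEps :: "nat \<Rightarrow> (nat \<Rightarrow> real) \<Rightarrow> real" where
  "geoEps i x =
    (if i = 1 then x 0 / x 1 + x 0 * x 2^3 / (x 1^2 * x 3) + x 0 * x 2^3 * x 4^3 / (x 1^2 * x 3^2 * x 5)
     else if i = 2 then x 1 / x 2 + x 1 * x 3 / (x 2^2 * x 4)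
     else polyE 1 x / (x 0^3 * x 2^3 * x 3))"

definition geoGamma :: "nat \<Rightarrow> (nat \<Rightarrow> real) \<Rightarrow> real" where
  "geoGamma i x =
    (if i = 1 then x 1^2 * x 3^2 * x 5^2 / (x 0 * x 2^3 * x 4^3)
     else if i = 2 then x 2^2 * x 4^2 / (x 1 * x 3 * x 5)
     else x 0^2 / (x 1 * x 3 * x 5))"

definition Xset :: "int list set" where
  "Xset = {n. length n = 6}"

definition eX :: "nat \<Rightarrow> int list \<Rightarrow> int list" where
  "eX i n = map (\<lambda>j. n ! j + UD (geoR i j) 1 n) [0..<6]"

definition fX :: "nat \<Rightarrow> int list \<Rightarrow> int list" where
  "fX i n = map (\<lambda>j. n ! j + UD (geoR i j) (-1) n) [0..<6]"

definition wtX :: "nat \<Rightarrow> int list \<Rightarrow> int" where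
  "wtX i n = UD (\<lambda>c x. geoGamma i x) 0 n"

definition epsX :: "nat \<Rightarrow> int list \<Rightarrow> int" where
  "epsX i n = UD (\<lambda>c x. geoEps i x) 0 n"

definition phiX :: "nat \<Rightarrow> int list \<Rightarrow> int" where
  "phiX i n = epsX i n + wtX i n"

text \<open>b = [b1, b2, b3, bb3, bb2, bb1] (bbk stands for \bar b_k).\<close>

definition Binf :: "int list set" where
  "Binf = {b. length b = 6 \<and> even (b ! 2 - b ! 3)}"

definition pos :: "int \<Rightarrow> int" where "pos y = max y 0"

definition zB1 :: "int list \<Rightarrow> int" where "zB1 b = b!5 - b!0"
definition zB2 :: "int list \<Rightarrow> int" where "zB2 b = b!4 - b!3"
definition zB3 :: "int list \<Rightarrow> int" where "zB3 b = b!2 - b!1"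
definition zB4 :: "int list \<Rightarrow> int" where "zB4 b = (b!3 - b!2) div 2"
definition sB :: "int list \<Rightarrow> int" where
  "sB b = b!0 + b!1 + (b!2 + b!3) div 2 + b!4 + b!5"

definition maxA :: "int list \<Rightarrow> int" where
  "maxA b = (let z1 = zB1 b; z2 = zB2 b; z3 = zB3 b; z4 = zB4 b in
     Max {0, z1, z1 + z2, z1 + z2 + 3*z4, z1 + z2 + z3 + 3*z4, 2*z1 + z2 + z3 + 3*z4})"

definition epsB :: "nat \<Rightarrow> int list \<Rightarrow> int" where
  "epsB i b =
    (if i = 1 then b!5 + pos (b!3 - b!4 + pos (b!1 - b!2))
     else if i = 2 then b!4 + pos (b!2 - b!3) div 2
     else - sB b + maxA b - (2 * zB1 b + zB2 b + zB3 b + 3 * zB4 b))"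

definition phiB :: "nat \<Rightarrow> int list \<Rightarrow> int" where
  "phiB i b =
    (if i = 1 then b!0 + pos (b!2 - b!1 + pos (b!4 - b!3))
     else if i = 2 then b!1 + pos (b!3 - b!2) div 2
     else - sB b + maxA b)"

definition wtB :: "nat \<Rightarrow> int list \<Rightarrow> int" where
  "wtB i b = phiB i b - epsB i b"

definition addv :: "int list \<Rightarrow> int list \<Rightarrow> int list" where
  "addv b d = map2 (+) b d"

definition eB :: "nat \<Rightarrow> int list \<Rightarrow> int list" where
  "eB i b =
    (if i = 1 then
       (if b!4 - b!3 \<ge> pos (b!1 - b!2) then addv b [0,0,0,0,1,-1]
        else if b!4 - b!3 < 0 \<and> 0 \<le> b!2 - b!1 then addv b [0,0,1,-1,0,0]
        else addv b [1,-1,0,0,0,0])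
     else if i = 2 then
       (if b!3 \<ge> b!2 then addv b [0,0,0,2,-1,0] else addv b [0,1,-2,0,0,0])
     else
       (let z1 = zB1 b; z2 = zB2 b; z3 = zB3 b; z4 = zB4 b in
        if z1+z2+z3+3*z4 < 0 \<and> z1+z2+3*z4 < 0 \<and> z1+z2 < 0 \<and> z1 < 0
          then addv b [-1,0,0,0,0,0]
        else if z1+z2+z3+3*z4 < 0 \<and> z2+3*z4 < 0 \<and> z2 < 0 \<and> z1 \<ge> 0
          then addv b [0,0,-1,-1,0,1]
        else if z1+z3+3*z4 < 0 \<and> z3+3*z4 < 0 \<and> z4 < 0 \<and> z2 \<ge> 0 \<and> z1+z2 \<ge> 0
          then addv b [0,0,-2,0,1,0]
        else if z1+z2+3*z4 \<ge> 0 \<and> z2+3*z4 \<ge> 0 \<and> z4 \<ge> 0 \<and> z3 < 0 \<and> z1+z3 < 0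
          then addv b [0,-1,0,2,0,0]
        else if z1+z2+z3+3*z4 \<ge> 0 \<and> z3+3*z4 \<ge> 0 \<and> z3 \<ge> 0 \<and> z1 < 0
          then addv b [-1,0,1,1,0,0]
        else addv b [0,0,0,0,0,1]))"

definition fB :: "nat \<Rightarrow> int list \<Rightarrow> int list" where
  "fB i b =
    (if i = 1 then
       (if pos (b!4 - b!3) \<le> b!1 - b!2 then addv b [-1,1,0,0,0,0]
        else if b!4 - b!3 \<le> 0 \<and> 0 < b!2 - b!1 then addv b [0,0,-1,1,0,0]
        else addv b [0,0,0,0,-1,1])
     else if i = 2 then
       (if b!3 \<le> b!2 then addv b [0,-1,2,0,0,0] else addv b [0,0,0,-2,1,0])
     else
       (let z1 = zB1 b; z2 = zB2 b; z3 = zB3 b; z4 = zB4 b in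
        if z1+z2+z3+3*z4 \<le> 0 \<and> z1+z2+3*z4 \<le> 0 \<and> z1+z2 \<le> 0 \<and> z1 \<le> 0
          then addv b [1,0,0,0,0,0]
        else if z1+z2+z3+3*z4 \<le> 0 \<and> z2+3*z4 \<le> 0 \<and> z2 \<le> 0 \<and> z1 > 0
          then addv b [0,0,1,1,0,-1]
        else if z1+z3+3*z4 \<le> 0 \<and> z3+3*z4 \<le> 0 \<and> z4 \<le> 0 \<and> z2 > 0 \<and> z1+z2 > 0
          then addv b [0,0,2,0,-1,0]
        else if z1+z2+3*z4 > 0 \<and> z2+3*z4 > 0 \<and> z4 > 0 \<and> z3 \<le> 0 \<and> z1+z3 \<le> 0
          then addv b [0,1,0,-2,0,0]
        else if z1+z2+z3+3*z4 > 0 \<and> z3+3*z4 > 0 \<and> z3 > 0 \<and> z1 \<le> 0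
          then addv b [1,0,-1,-1,0,0]
        else addv b [0,0,0,0,0,-1]))"

end

theory Submission
  imports Defs
begin

text \<open>
  Ultra-discretization turns the positive rational maps of the geometric crystal into
  piecewise-linear maps: sums become maxima and products become sums of degrees.
  Written with the factor (x3 + x2 x4)^3 (for G: (x3 + x2 x4)^2 (x3 + c x2 x4)), the
  polynomials D, E, F, G, H tropicalize to maxima of the six terms
  0, z1, z1 + z2, z1 + z2 + 3 z4, z1 + z2 + z3 + 3 z4, 2 z1 + z2 + z3 + 3 z4 of maxA,
  each shifted by k times the power of c = t^k in the corresponding monomial, where the
  z_j are the coordinates of b = Omega n. The degree vector of e_0^c, transported by the
  linear map Omega, therefore depends only on which of the six terms is maximal: the
  last maximal one for k = 1, the first for k = -1. In each of these regions it is the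
  step prescribed by the corresponding case (E_j), resp. (F_j), of B_infinity. For
  i = 1, 2 the comparison is a direct case split.
\<close>

section \<open>Asymptotic degree\<close>

text \<open>
  Requiring a positive leading coefficient rules out cancellation, which is what makes
  the degree of a sum the maximum of the degrees.
\<close>

definition has_degree :: "(real \<Rightarrow> real) \<Rightarrow> int \<Rightarrow> bool" where
  "has_degree F d \<longleftrightarrow> (\<exists>L>0. ((\<lambda>t. F t / t powi d) \<longlongrightarrow> L) at_top)"

lemma tendsto_powi_neg_at_top:
  assumes "m < 0"
  shows "((\<lambda>t::real. t powi m) \<longlongrightarrow> 0) at_top"
proof -
  have powi_eq: "t powi m = inverse (t ^ nat (-m))" for t :: real
    using assms by (simp add: power_int_def power_inverse)
  have "filterlim (\<lambda>t::real. t ^ nat (-m)) at_top at_top"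
    using assms by (intro filterlim_pow_at_top filterlim_ident) auto
  then show ?thesis
    unfolding powi_eq by (rule tendsto_inverse_0_at_top)
qed

lemma tendsto_divide_powi_higher:
  fixes F :: "real \<Rightarrow> real"
  assumes lim: "((\<lambda>t. F t / t powi a) \<longlongrightarrow> L) at_top" and "a < b"
  shows "((\<lambda>t. F t / t powi b) \<longlongrightarrow> 0) at_top"
proof -
  have "((\<lambda>t. (F t / t powi a) * t powi (a - b)) \<longlongrightarrow> 0) at_top"
    using tendsto_mult[OF lim tendsto_powi_neg_at_top[of "a - b"]] \<open>a < b\<close> by simp
  moreover have "\<forall>\<^sub>F t in at_top. (F t / t powi a) * t powi (a - b) = F t / t powi b"
    using eventually_gt_at_top[of "0::real"] by eventually_elim (simp add: power_int_diff)
  ultimately show ?thesis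
    by (rule Lim_transform_eventually)
qed

lemma degree_unique:
  fixes F :: "real \<Rightarrow> real"
  assumes "((\<lambda>t. F t / t powi a) \<longlongrightarrow> L) at_top" "L \<noteq> 0"
      and "((\<lambda>t. F t / t powi b) \<longlongrightarrow> M) at_top" "M \<noteq> 0"
  shows "a = b"
proof (rule ccontr)
  assume "a \<noteq> b"
  then consider "a < b" | "b < a" by linarith
  then show False
  proof cases
    case 1
    with assms(1,3) have "M = 0"
      using tendsto_divide_powi_higher tendsto_unique[OF trivial_limit_at_top_linorder] by blast
    with \<open>M \<noteq> 0\<close> show False ..
  next
    case 2
    with assms(1,3) have "L = 0"
      using tendsto_divide_powi_higher tendsto_unique[OF trivial_limit_at_top_linorder] by blast
    with \<open>L \<noteq> 0\<close> show False ..
  qed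
qed

lemma UD_eqI:
  assumes "has_degree (\<lambda>t. f (t powi k) (\<lambda>j. t powi (n ! j))) d"
  shows "UD f k n = d"
proof -
  obtain L where "L > 0" "((\<lambda>t. f (t powi k) (\<lambda>j. t powi (n ! j)) / t powi d) \<longlongrightarrow> L) at_top"
    using assms unfolding has_degree_def by blast
  then show ?thesis
    unfolding UD_def by (intro the_equality exI[of _ L]) (auto dest: degree_unique)
qed

lemma has_degree_cong: "has_degree F a \<Longrightarrow> a = b \<Longrightarrow> has_degree F b"
  by simp

lemma has_degree_const: "(c::real) > 0 \<Longrightarrow> has_degree (\<lambda>t. c) 0"
  unfolding has_degree_def by auto

lemma has_degree_powi: "has_degree (\<lambda>t. t powi e) e"
proof -
  have "\<forall>\<^sub>F t::real in at_top. 1 = t powi e / t powi e"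
    using eventually_gt_at_top[of "0::real"] by eventually_elim simp
  then have "((\<lambda>t::real. t powi e / t powi e) \<longlongrightarrow> 1) at_top"
    by (rule Lim_transform_eventually[OF tendsto_const])
  then show ?thesis
    unfolding has_degree_def by (intro exI[of _ 1]) simp
qed

lemma has_degree_mult:
  assumes "has_degree F a" "has_degree G b"
  shows "has_degree (\<lambda>t. F t * G t) (a + b)"
proof -
  obtain L M where "L > 0" "M > 0" and lim: "((\<lambda>t. F t / t powi a) \<longlongrightarrow> L) at_top"
      "((\<lambda>t. G t / t powi b) \<longlongrightarrow> M) at_top"
    using assms unfolding has_degree_def by blast
  have "((\<lambda>t. (F t / t powi a) * (G t / t powi b)) \<longlongrightarrow> L * M) at_top"
    by (intro tendsto_mult lim)
  moreover have "\<forall>\<^sub>F t in at_top. (F t / t powi a) * (G t / t powi b) = F t * G t / t powi (a + b)"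
    using eventually_gt_at_top[of "0::real"] by eventually_elim (simp add: power_int_add)
  ultimately show ?thesis
    unfolding has_degree_def using \<open>L > 0\<close> \<open>M > 0\<close>
    by (blast intro: Lim_transform_eventually mult_pos_pos)
qed

lemma has_degree_divide:
  assumes "has_degree F a" "has_degree G b"
  shows "has_degree (\<lambda>t. F t / G t) (a - b)"
proof -
  obtain L M where "L > 0" "M > 0" and lim: "((\<lambda>t. F t / t powi a) \<longlongrightarrow> L) at_top"
      "((\<lambda>t. G t / t powi b) \<longlongrightarrow> M) at_top"
    using assms unfolding has_degree_def by blast
  have "((\<lambda>t. (F t / t powi a) / (G t / t powi b)) \<longlongrightarrow> L / M) at_top"
    using \<open>M > 0\<close> by (intro tendsto_divide lim) simp
  moreover have "\<forall>\<^sub>F t in at_top. (F t / t powi a) / (G t / t powi b) = (F t / G t) / t powi (a - b)"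
    using eventually_gt_at_top[of "0::real"] by eventually_elim (simp add: power_int_diff)
  ultimately show ?thesis
    unfolding has_degree_def using \<open>L > 0\<close> \<open>M > 0\<close>
    by (blast intro: Lim_transform_eventually divide_pos_pos)
qed

lemma has_degree_add:
  assumes "has_degree F a" "has_degree G b"
  shows "has_degree (\<lambda>t. F t + G t) (max a b)"
proof -
  obtain L M where "L > 0" "M > 0" and lim: "((\<lambda>t. F t / t powi a) \<longlongrightarrow> L) at_top"
      "((\<lambda>t. G t / t powi b) \<longlongrightarrow> M) at_top"
    using assms unfolding has_degree_def by blast
  define m where "m = max a b"
  have limF: "((\<lambda>t. F t / t powi m) \<longlongrightarrow> (if a = m then L else 0)) at_top"
    using lim(1) tendsto_divide_powi_higher[OF lim(1)] by (auto simp: m_def)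
  have limG: "((\<lambda>t. G t / t powi m) \<longlongrightarrow> (if b = m then M else 0)) at_top"
    using lim(2) tendsto_divide_powi_higher[OF lim(2)] by (auto simp: m_def)
  have "((\<lambda>t. (F t + G t) / t powi m) \<longlongrightarrow> (if a = m then L else 0) + (if b = m then M else 0)) at_top"
    unfolding add_divide_distrib by (rule tendsto_add[OF limF limG])
  moreover have "(if a = m then L else 0) + (if b = m then M else 0) > 0"
    using \<open>L > 0\<close> \<open>M > 0\<close> by (auto simp: m_def max_def)
  ultimately show ?thesis
    unfolding has_degree_def m_def by blast
qed

lemma has_degree_power:
  assumes "has_degree F a"
  shows "has_degree (\<lambda>t. F t ^ m) (int m * a)"
proof -
  obtain L where "L > 0" and lim: "((\<lambda>t. F t / t powi a) \<longlongrightarrow> L) at_top"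
    using assms unfolding has_degree_def by blast
  have "((\<lambda>t. (F t / t powi a) ^ m) \<longlongrightarrow> L ^ m) at_top"
    by (intro tendsto_power lim)
  moreover have "\<forall>\<^sub>F t in at_top. (F t / t powi a) ^ m = F t ^ m / t powi (int m * a)"
    using eventually_gt_at_top[of "0::real"]
    by eventually_elim (simp add: power_divide power_int_power' mult.commute)
  ultimately show ?thesis
    unfolding has_degree_def using \<open>L > 0\<close>
    by (blast intro: Lim_transform_eventually zero_less_power)
qed

lemma has_degree_one: "has_degree (\<lambda>t. 1) 0"
  by (rule has_degree_const) simp

lemma UD_const_one: "(\<And>c x. f c x = 1) \<Longrightarrow> UD f k n = 0"
  by (rule UD_eqI) (simp add: has_degree_one)

lemmas has_degree_rules = has_degree_add has_degree_mult has_degree_divide has_degree_power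
  has_degree_powi has_degree_one

lemma mult_max_nonneg_left:
  fixes c :: "'a::linordered_semiring"
  assumes "0 \<le> c"
  shows "c * max a b = max (c * a) (c * b)"
proof -
  have "mono ((*) c)"
    using assms by (auto intro: monoI mult_left_mono)
  then show ?thesis
    by (simp add: max_of_mono)
qed

lemmas max_distribs = max_add_distrib_left max_add_distrib_right
  mult_max_nonneg_left[OF of_nat_0_le_iff]

section \<open>Tropical quantities on B_infinity\<close>

definition max6 :: "int \<Rightarrow> int \<Rightarrow> int \<Rightarrow> int \<Rightarrow> int \<Rightarrow> int \<Rightarrow> int" where
  "max6 a0 a1 a2 a3 a4 a5 = max a0 (max a1 (max a2 (max a3 (max a4 a5))))"

lemma maxA_eq_max6:
  "maxA b = max6 0 (zB1 b) (zB1 b + zB2 b) (zB1 b + zB2 b + 3 * zB4 b)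
     (zB1 b + zB2 b + zB3 b + 3 * zB4 b) (2 * zB1 b + zB2 b + zB3 b + 3 * zB4 b)"
  by (simp add: maxA_def max6_def Let_def)

text \<open>
  tropD k (Omega n), ..., tropH k (Omega n) are the degrees of D, F, G, H at c = t^k and
  x_j = t^(n_j), minus the degree n1 + 3 n2 + 2 n3 + n5 of their common monomial
  x1 x2^3 x3^2 x5; maxA plays the same role for E.
\<close>

definition tropD :: "int \<Rightarrow> int list \<Rightarrow> int" where
  "tropD k b = (let z1 = zB1 b; z2 = zB2 b; z3 = zB3 b; z4 = zB4 b in
     max6 0 (z1 + k) (z1 + z2 + k) (z1 + z2 + 3*z4 + k) (z1 + z2 + z3 + 3*z4 + k)
       (2*z1 + z2 + z3 + 3*z4 + 2*k))"

definition tropF :: "int \<Rightarrow> int list \<Rightarrow> int" where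
  "tropF k b = (let z1 = zB1 b; z2 = zB2 b; z3 = zB3 b; z4 = zB4 b in
     max6 0 z1 (z1 + z2 + k) (z1 + z2 + 3*z4 + k) (z1 + z2 + z3 + 3*z4 + k) (2*z1 + z2 + z3 + 3*z4 + k))"

definition tropG :: "int \<Rightarrow> int list \<Rightarrow> int" where
  "tropG k b = (let z1 = zB1 b; z2 = zB2 b; z3 = zB3 b; z4 = zB4 b in
     max6 0 z1 (z1 + z2) (z1 + z2 + 3*z4 + k) (z1 + z2 + z3 + 3*z4 + k) (2*z1 + z2 + z3 + 3*z4 + k))"

definition tropH :: "int \<Rightarrow> int list \<Rightarrow> int" where
  "tropH k b = (let z1 = zB1 b; z2 = zB2 b; z3 = zB3 b; z4 = zB4 b in
     max6 0 z1 (z1 + z2) (z1 + z2 + 3*z4) (z1 + z2 + z3 + 3*z4 + k) (2*z1 + z2 + z3 + 3*z4 + k))"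

text \<open>
  The image under Omega of the degree vector
  (D - k - E, F - k - E, G - k - E, D + H - 2k - E - F, D - k - G, D - k - H)
  of the factors R_0, ..., R_5 of e_0^c.
\<close>

definition tropical_increment :: "int \<Rightarrow> int list \<Rightarrow> int list" where
  "tropical_increment k b = (let D = tropD k b; E = maxA b; F = tropF k b; G = tropG k b; H = tropH k b in
     [D - k - H, H - G, H + 2*G - D - E - F, 2*G + F - D - E - H, F - G, D - F])"

lemmas tropical_increment_unfold = tropical_increment_def tropD_def tropF_def tropG_def tropH_def
  maxA_eq_max6 max6_def Let_def

lemma eB_0_eq_tropical: "eB 0 b = addv b (tropical_increment 1 b)"
proof -
  define a1 a2 a3 a4 a5 where a_def: "a1 = zB1 b" "a2 = zB1 b + zB2 b" "a3 = zB1 b + zB2 b + 3 * zB4 b"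
    "a4 = zB1 b + zB2 b + zB3 b + 3 * zB4 b" "a5 = 2 * zB1 b + zB2 b + zB3 b + 3 * zB4 b"
  \<comment> \<open>each case fixes the last of the terms 0, a1, ..., a5 attaining their maximum\<close>
  consider "0 > a1" "0 > a2" "0 > a3" "0 > a4" "0 > a5"
    | "a1 \<ge> 0" "a1 > a2" "a1 > a3" "a1 > a4" "a1 > a5"
    | "a2 \<ge> 0" "a2 \<ge> a1" "a2 > a3" "a2 > a4" "a2 > a5"
    | "a3 \<ge> 0" "a3 \<ge> a1" "a3 \<ge> a2" "a3 > a4" "a3 > a5"
    | "a4 \<ge> 0" "a4 \<ge> a1" "a4 \<ge> a2" "a4 \<ge> a3" "a4 > a5"
    | "a5 \<ge> 0" "a5 \<ge> a1" "a5 \<ge> a2" "a5 \<ge> a3" "a5 \<ge> a4"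
    by (smt (verit))
  then show ?thesis
    unfolding eB_def Let_def tropical_increment_unfold a_def
    by cases (auto simp: max.absorb1 max.absorb2)
qed

lemma fB_0_eq_tropical: "fB 0 b = addv b (tropical_increment (-1) b)"
proof -
  define a1 a2 a3 a4 a5 where a_def: "a1 = zB1 b" "a2 = zB1 b + zB2 b" "a3 = zB1 b + zB2 b + 3 * zB4 b"
    "a4 = zB1 b + zB2 b + zB3 b + 3 * zB4 b" "a5 = 2 * zB1 b + zB2 b + zB3 b + 3 * zB4 b"
  \<comment> \<open>each case fixes the first of the terms 0, a1, ..., a5 attaining their maximum\<close>
  consider "0 \<ge> a1" "0 \<ge> a2" "0 \<ge> a3" "0 \<ge> a4" "0 \<ge> a5"
    | "a1 > 0" "a1 \<ge> a2" "a1 \<ge> a3" "a1 \<ge> a4" "a1 \<ge> a5"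
    | "a2 > 0" "a2 > a1" "a2 \<ge> a3" "a2 \<ge> a4" "a2 \<ge> a5"
    | "a3 > 0" "a3 > a1" "a3 > a2" "a3 \<ge> a4" "a3 \<ge> a5"
    | "a4 > 0" "a4 > a1" "a4 > a2" "a4 > a3" "a4 \<ge> a5"
    | "a5 > 0" "a5 > a1" "a5 > a2" "a5 > a3" "a5 > a4"
    by (smt (verit))
  then show ?thesis
    unfolding fB_def Let_def tropical_increment_unfold a_def
    by cases (auto simp: max.absorb1 max.absorb2)
qed

section \<open>The coordinate change Omega\<close>

lemma nth6 [simp]:
  "[a0, a1, a2, a3, a4, a5] ! 0 = a0" "[a0, a1, a2, a3, a4, a5] ! 1 = a1"
  "[a0, a1, a2, a3, a4, a5] ! 2 = a2" "[a0, a1, a2, a3, a4, a5] ! 3 = a3"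
  "[a0, a1, a2, a3, a4, a5] ! 4 = a4" "[a0, a1, a2, a3, a4, a5] ! 5 = a5"
  by (simp_all add: numeral_eq_Suc)

lemma length_6_cases:
  assumes "length n = 6"
  obtains n0 n1 n2 n3 n4 n5 where "n = [n0, n1, n2, n3, n4, n5]"
  using assms by (auto simp: length_Suc_conv eval_nat_numeral)

lemma map_upt_6: "map f [0..<6] = [f 0, f 1, f 2, f 3, f 4, f 5]"
  by (simp add: upt_rec eval_nat_numeral)

definition Omega :: "int list \<Rightarrow> int list" where
  "Omega n = [n!5, n!4 - n!5, n!3 - 2 * n!4, 2 * n!2 - n!3, n!1 - n!2, n!0 - n!1]"

text \<open>Solving Omega n = b for n; evenness of b3 - bb3 makes the division by 2 exact.\<close>

definition Omega_inv :: "int list \<Rightarrow> int list" where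
  "Omega_inv b = (let n5 = b!0; n4 = b!1 + n5; n3 = b!2 + 2 * n4; n2 = (b!3 + n3) div 2;
     n1 = b!4 + n2; n0 = b!5 + n1 in [n0, n1, n2, n3, n4, n5])"

lemma Omega_explicit:
  "Omega [n0, n1, n2, n3, n4, n5] = [n5, n4 - n5, n3 - 2 * n4, 2 * n2 - n3, n1 - n2, n0 - n1]"
  by (simp add: Omega_def)

lemma Omega_addv:
  "Omega (addv [n0, n1, n2, n3, n4, n5] [d0, d1, d2, d3, d4, d5]) =
     addv (Omega [n0, n1, n2, n3, n4, n5]) (Omega [d0, d1, d2, d3, d4, d5])"
  by (simp add: addv_def Omega_explicit)

lemma zB_Omega:
  "zB1 (Omega [n0, n1, n2, n3, n4, n5]) = n0 - n1 - n5"
  "zB2 (Omega [n0, n1, n2, n3, n4, n5]) = n1 - 3 * n2 + n3"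
  "zB3 (Omega [n0, n1, n2, n3, n4, n5]) = n3 - 3 * n4 + n5"
  "zB4 (Omega [n0, n1, n2, n3, n4, n5]) = n2 - n3 + n4"
proof -
  have "2 * n2 - n3 - (n3 - 2 * n4) = 2 * (n2 - n3 + n4)" by simp
  then show "zB4 (Omega [n0, n1, n2, n3, n4, n5]) = n2 - n3 + n4"
    unfolding zB4_def Omega_explicit nth6 by simp
qed (simp_all add: zB1_def zB2_def zB3_def Omega_explicit)

lemma sB_Omega: "sB (Omega [n0, n1, n2, n3, n4, n5]) = n0"
proof -
  have "n3 - 2 * n4 + (2 * n2 - n3) = 2 * (n2 - n4)" by simp
  then show ?thesis unfolding sB_def Omega_explicit nth6 by simp
qed

lemma bij_betw_Omega: "bij_betw Omega Xset Binf"
proof (rule bij_betw_byWitness[where f' = Omega_inv])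
  show "\<forall>n\<in>Xset. Omega_inv (Omega n) = n"
  proof
    fix n assume "n \<in> Xset"
    then obtain n0 n1 n2 n3 n4 n5 where n: "n = [n0, n1, n2, n3, n4, n5]"
      unfolding Xset_def by (blast elim: length_6_cases)
    have double: "2 * n2 - n3 + (n3 - 2 * (n4 - n5 + n5)) + 2 * (n4 - n5 + n5) = 2 * n2" by simp
    show "Omega_inv (Omega n) = n"
      unfolding n Omega_explicit Omega_inv_def Let_def nth6 double by simp
  qed
  show "\<forall>b\<in>Binf. Omega (Omega_inv b) = b"
  proof
    fix b assume "b \<in> Binf"
    then obtain b0 b1 b2 b3 b4 b5 where b: "b = [b0, b1, b2, b3, b4, b5]" and "even (b2 - b3)"
      unfolding Binf_def by (auto elim: length_6_cases)
    then obtain m where m: "b2 - b3 = 2 * m"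
      by (blast elim: evenE)
    then have double: "b3 + (b2 + 2 * (b1 + b0)) = 2 * (b3 + m + b1 + b0)" by simp
    show "Omega (Omega_inv b) = b"
      unfolding b Omega_explicit Omega_inv_def Let_def nth6 double using m by simp
  qed
  show "Omega ` Xset \<subseteq> Binf"
  proof
    fix b assume "b \<in> Omega ` Xset"
    then obtain n0 n1 n2 n3 n4 n5 where "b = Omega [n0, n1, n2, n3, n4, n5]"
      unfolding Xset_def by (auto elim: length_6_cases)
    moreover have "n3 - 2 * n4 - (2 * n2 - n3) = 2 * (n3 - n4 - n2)" by simp
    ultimately show "b \<in> Binf"
      unfolding Binf_def Omega_explicit by simp
  qed
  show "Omega_inv ` Binf \<subseteq> Xset"
    unfolding Xset_def Omega_inv_def Let_def by auto
qed

section \<open>Ultra-discretization of the geometric crystal\<close>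

lemma polyD_factored:
  "polyD c x = c^2 * x 0^2 * x 2^3 * x 3 + x 1 * x 2^3 * x 3^2 * x 5
     + c * x 0 * (x 1 * (x 3 + x 2 * x 4)^3 + x 2^3 * x 3^2 + x 1 * x 2^3 * x 3 * x 5)"
  unfolding polyD_def by algebra

lemma polyE_factored:
  "polyE c x = x 0^2 * x 2^3 * x 3 + x 1 * x 2^3 * x 3^2 * x 5
     + x 0 * (x 1 * (x 3 + x 2 * x 4)^3 + x 2^3 * x 3^2 + x 1 * x 2^3 * x 3 * x 5)"
  unfolding polyE_def by algebra

lemma polyF_factored:
  "polyF c x = c * x 0^2 * x 2^3 * x 3 + x 1 * x 2^3 * x 3^2 * x 5
     + x 0 * (c * x 1 * (x 3 + x 2 * x 4)^3 + x 2^3 * x 3^2 + c * x 1 * x 2^3 * x 3 * x 5)"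
  unfolding polyF_def by algebra

lemma polyG_factored:
  "polyG c x = c * x 0^2 * x 2^3 * x 3 + x 1 * x 2^3 * x 3^2 * x 5
     + x 0 * (x 1 * (x 3 + x 2 * x 4)^2 * (x 3 + c * x 2 * x 4) + x 2^3 * x 3^2
              + c * x 1 * x 2^3 * x 3 * x 5)"
  unfolding polyG_def by algebra

lemma polyH_factored:
  "polyH c x = c * x 0^2 * x 2^3 * x 3 + x 1 * x 2^3 * x 3^2 * x 5
     + x 0 * (x 1 * (x 3 + x 2 * x 4)^3 + x 2^3 * x 3^2 + c * x 1 * x 2^3 * x 3 * x 5)"
  unfolding polyH_def by algebra

lemma has_degree_polyD:
  "has_degree (\<lambda>t. polyD (t powi k) (\<lambda>j. t powi ([n0, n1, n2, n3, n4, n5] ! j)))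
     (n1 + 3 * n2 + 2 * n3 + n5 + tropD k (Omega [n0, n1, n2, n3, n4, n5]))"
  unfolding polyD_factored nth6
  by (rule has_degree_cong, (rule has_degree_rules)+)
     (simp only: tropD_def Let_def zB_Omega max6_def max_distribs, simp only: max_def of_nat_numeral, smt)

lemma has_degree_polyE:
  "has_degree (\<lambda>t. polyE c (\<lambda>j. t powi ([n0, n1, n2, n3, n4, n5] ! j)))
     (n1 + 3 * n2 + 2 * n3 + n5 + maxA (Omega [n0, n1, n2, n3, n4, n5]))"
  unfolding polyE_factored nth6
  by (rule has_degree_cong, (rule has_degree_rules)+)
     (simp only: maxA_eq_max6 zB_Omega max6_def max_distribs, simp only: max_def of_nat_numeral, smt)

lemma has_degree_polyF:
  "has_degree (\<lambda>t. polyF (t powi k) (\<lambda>j. t powi ([n0, n1, n2, n3, n4, n5] ! j)))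
     (n1 + 3 * n2 + 2 * n3 + n5 + tropF k (Omega [n0, n1, n2, n3, n4, n5]))"
  unfolding polyF_factored nth6
  by (rule has_degree_cong, (rule has_degree_rules)+)
     (simp only: tropF_def Let_def zB_Omega max6_def max_distribs, simp only: max_def of_nat_numeral, smt)

text \<open>
  Only for k = 1 or k = -1: the factor (x3 + x2 x4)^2 (x3 + c x2 x4) has degree
  2 max u v + max u (v + k), which equals max (3 u) (3 v + k) by integrality only then.
\<close>

lemma has_degree_polyG:
  assumes "k = 1 \<or> k = -1"
  shows "has_degree (\<lambda>t. polyG (t powi k) (\<lambda>j. t powi ([n0, n1, n2, n3, n4, n5] ! j)))
     (n1 + 3 * n2 + 2 * n3 + n5 + tropG k (Omega [n0, n1, n2, n3, n4, n5]))"
  unfolding polyG_factored nth6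
  by (rule has_degree_cong, (rule has_degree_rules)+)
     (simp only: tropG_def Let_def zB_Omega max6_def max_distribs, simp only: max_def of_nat_numeral,
      use assms in smt)

lemma has_degree_polyH:
  "has_degree (\<lambda>t. polyH (t powi k) (\<lambda>j. t powi ([n0, n1, n2, n3, n4, n5] ! j)))
     (n1 + 3 * n2 + 2 * n3 + n5 + tropH k (Omega [n0, n1, n2, n3, n4, n5]))"
  unfolding polyH_factored nth6
  by (rule has_degree_cong, (rule has_degree_rules)+)
     (simp only: tropH_def Let_def zB_Omega max6_def max_distribs, simp only: max_def of_nat_numeral, smt)

lemma geoR_0:
  "geoR 0 0 c x = polyD c x / (c * polyE 1 x)"
  "geoR 0 1 c x = polyF c x / (c * polyE 1 x)"
  "geoR 0 2 c x = polyG c x / (c * polyE 1 x)"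
  "geoR 0 3 c x = polyD c x * polyH c x / (c^2 * polyE 1 x * polyF c x)"
  "geoR 0 4 c x = polyD c x / (c * polyG c x)"
  "geoR 0 5 c x = polyD c x / (c * polyH c x)"
  by (simp_all add: geoR_def polyE_def)

lemma geoR_1:
  defines "a x \<equiv> x 0 / x 1" and "b x \<equiv> x 0 * x 2^3 / (x 1^2 * x 3)"
    and "d x \<equiv> x 0 * x 2^3 * x 4^3 / (x 1^2 * x 3^2 * x 5)"
  shows "geoR 1 1 c x = (c * a x + b x + d x) / (a x + b x + d x)"
    and "geoR 1 3 c x = (c * a x + c * b x + d x) / (c * a x + b x + d x)"
    and "geoR 1 5 c x = c * (a x + b x + d x) / (c * a x + c * b x + d x)"
  by (auto simp: geoR_def Let_def a_def b_def d_def)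

lemma geoR_2:
  defines "p x \<equiv> x 1 / x 2" and "q x \<equiv> x 1 * x 3 / (x 2^2 * x 4)"
  shows "geoR 2 2 c x = (c * p x + q x) / (p x + q x)"
    and "geoR 2 4 c x = c * (p x + q x) / (c * p x + q x)"
  by (auto simp: geoR_def Let_def p_def q_def)

lemma geoEps_explicit:
  "geoEps 0 x = polyE 1 x / (x 0^3 * x 2^3 * x 3)"
  "geoEps 1 x = x 0 / x 1 + x 0 * x 2^3 / (x 1^2 * x 3) + x 0 * x 2^3 * x 4^3 / (x 1^2 * x 3^2 * x 5)"
  "geoEps 2 x = x 1 / x 2 + x 1 * x 3 / (x 2^2 * x 4)"
  by (simp_all add: geoEps_def)

lemma geoGamma_explicit:
  "geoGamma 0 x = x 0^2 / (x 1 * x 3 * x 5)"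
  "geoGamma 1 x = x 1^2 * x 3^2 * x 5^2 / (x 0 * x 2^3 * x 4^3)"
  "geoGamma 2 x = x 2^2 * x 4^2 / (x 1 * x 3 * x 5)"
  by (simp_all add: geoGamma_def)

lemma UD_geoR_0:
  fixes n0 n1 n2 n3 n4 n5 k :: int
  defines "b \<equiv> Omega [n0, n1, n2, n3, n4, n5]"
  shows "UD (geoR 0 0) k [n0, n1, n2, n3, n4, n5] = tropD k b - k - maxA b"
    and "UD (geoR 0 1) k [n0, n1, n2, n3, n4, n5] = tropF k b - k - maxA b"
    and "UD (geoR 0 3) k [n0, n1, n2, n3, n4, n5] = tropD k b + tropH k b - 2 * k - maxA b - tropF k b"
    and "UD (geoR 0 5) k [n0, n1, n2, n3, n4, n5] = tropD k b - k - tropH k b"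
    and "k = 1 \<or> k = -1 \<Longrightarrow> UD (geoR 0 2) k [n0, n1, n2, n3, n4, n5] = tropG k b - k - maxA b"
    and "k = 1 \<or> k = -1 \<Longrightarrow> UD (geoR 0 4) k [n0, n1, n2, n3, n4, n5] = tropD k b - k - tropG k b"
  unfolding geoR_0 b_def
  by (rule UD_eqI, rule has_degree_cong,
      (rule has_degree_rules has_degree_polyD has_degree_polyE has_degree_polyF has_degree_polyH
         has_degree_polyG, assumption?)+,
      simp add: algebra_simps)+

lemma UD_geoR_1:
  fixes n0 n1 n2 n3 n4 n5 k :: int
  defines "a \<equiv> n0 - n1" and "b \<equiv> n0 + 3 * n2 - 2 * n1 - n3"
    and "d \<equiv> n0 + 3 * n2 + 3 * n4 - 2 * n1 - 2 * n3 - n5"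
  shows "UD (geoR 1 1) k [n0, n1, n2, n3, n4, n5] = max (k + a) (max b d) - max a (max b d)"
    and "UD (geoR 1 3) k [n0, n1, n2, n3, n4, n5] = max (k + a) (max (k + b) d) - max (k + a) (max b d)"
    and "UD (geoR 1 5) k [n0, n1, n2, n3, n4, n5] = k + max a (max b d) - max (k + a) (max (k + b) d)"
    and "UD (geoR 1 0) k n = 0" and "UD (geoR 1 2) k n = 0" and "UD (geoR 1 4) k n = 0"
  unfolding geoR_1
  by (rule UD_eqI, rule has_degree_cong, simp only: nth6, (rule has_degree_rules)+,
      simp add: a_def b_def d_def algebra_simps)+
     (rule UD_const_one, simp add: geoR_def)+

lemma UD_geoR_2:
  fixes n0 n1 n2 n3 n4 n5 k :: int
  defines "p \<equiv> n1 - n2" and "q \<equiv> n1 + n3 - 2 * n2 - n4"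
  shows "UD (geoR 2 2) k [n0, n1, n2, n3, n4, n5] = max (k + p) q - max p q"
    and "UD (geoR 2 4) k [n0, n1, n2, n3, n4, n5] = k + max p q - max (k + p) q"
    and "UD (geoR 2 0) k n = 0" and "UD (geoR 2 1) k n = 0" and "UD (geoR 2 3) k n = 0"
    and "UD (geoR 2 5) k n = 0"
  unfolding geoR_2
  by (rule UD_eqI, rule has_degree_cong, simp only: nth6, (rule has_degree_rules)+,
      simp add: p_def q_def algebra_simps)+
     (rule UD_const_one, simp add: geoR_def)+

lemma epsX_explicit:
  fixes n0 n1 n2 n3 n4 n5 :: int
  shows "epsX 0 [n0, n1, n2, n3, n4, n5] = maxA (Omega [n0, n1, n2, n3, n4, n5]) + n1 + n3 + n5 - 3 * n0"
    and "epsX 1 [n0, n1, n2, n3, n4, n5] =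
      max (n0 - n1) (max (n0 + 3 * n2 - 2 * n1 - n3) (n0 + 3 * n2 + 3 * n4 - 2 * n1 - 2 * n3 - n5))"
    and "epsX 2 [n0, n1, n2, n3, n4, n5] = max (n1 - n2) (n1 + n3 - 2 * n2 - n4)"
  unfolding epsX_def geoEps_explicit
  by (rule UD_eqI, rule has_degree_cong, simp only: nth6,
      (rule has_degree_rules has_degree_polyE)+, simp add: algebra_simps)+

lemma wtX_explicit:
  fixes n0 n1 n2 n3 n4 n5 :: int
  shows "wtX 0 [n0, n1, n2, n3, n4, n5] = 2 * n0 - n1 - n3 - n5"
    and "wtX 1 [n0, n1, n2, n3, n4, n5] = 2 * n1 + 2 * n3 + 2 * n5 - n0 - 3 * n2 - 3 * n4"
    and "wtX 2 [n0, n1, n2, n3, n4, n5] = 2 * n2 + 2 * n4 - n1 - n3 - n5"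
  unfolding wtX_def geoGamma_explicit
  by (rule UD_eqI, rule has_degree_cong, simp only: nth6,
      (rule has_degree_rules)+, simp add: algebra_simps)+

lemma eX_explicit:
  "eX i [n0, n1, n2, n3, n4, n5] = addv [n0, n1, n2, n3, n4, n5]
     (map (\<lambda>j. UD (geoR i j) 1 [n0, n1, n2, n3, n4, n5]) [0..<6])"
  unfolding eX_def addv_def map_upt_6 by simp

lemma fX_explicit:
  "fX i [n0, n1, n2, n3, n4, n5] = addv [n0, n1, n2, n3, n4, n5]
     (map (\<lambda>j. UD (geoR i j) (-1) [n0, n1, n2, n3, n4, n5]) [0..<6])"
  unfolding fX_def addv_def map_upt_6 by simp

section \<open>Omega is a morphism of crystals\<close>

lemma Omega_crystal_0:
  fixes n0 n1 n2 n3 n4 n5 :: int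
  defines "n \<equiv> [n0, n1, n2, n3, n4, n5]"
  shows "Omega (eX 0 n) = eB 0 (Omega n)" and "Omega (fX 0 n) = fB 0 (Omega n)"
    and "epsB 0 (Omega n) = epsX 0 n" and "wtB 0 (Omega n) = wtX 0 n"
proof -
  show "Omega (eX 0 n) = eB 0 (Omega n)"
    unfolding n_def eX_explicit map_upt_6 eB_0_eq_tropical Omega_addv
      UD_geoR_0(1-4) UD_geoR_0(5,6)[OF disjI1[OF refl]]
    by (simp add: tropical_increment_def Let_def Omega_explicit addv_def algebra_simps)
  show "Omega (fX 0 n) = fB 0 (Omega n)"
    unfolding n_def fX_explicit map_upt_6 fB_0_eq_tropical Omega_addv
      UD_geoR_0(1-4) UD_geoR_0(5,6)[OF disjI2[OF refl]]
    by (simp add: tropical_increment_def Let_def Omega_explicit addv_def algebra_simps)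
  show "epsB 0 (Omega n) = epsX 0 n"
    unfolding n_def epsB_def epsX_explicit zB_Omega sB_Omega by simp
  show "wtB 0 (Omega n) = wtX 0 n"
    unfolding n_def wtB_def phiB_def epsB_def wtX_explicit zB_Omega sB_Omega by simp
qed

lemma Omega_crystal_1:
  fixes n0 n1 n2 n3 n4 n5 :: int
  defines "n \<equiv> [n0, n1, n2, n3, n4, n5]"
  shows "Omega (eX 1 n) = eB 1 (Omega n)" and "Omega (fX 1 n) = fB 1 (Omega n)"
    and "epsB 1 (Omega n) = epsX 1 n" and "wtB 1 (Omega n) = wtX 1 n"
proof -
  show "Omega (eX 1 n) = eB 1 (Omega n)"
    unfolding n_def eX_explicit map_upt_6 Omega_addv eB_def Omega_explicit UD_geoR_1
    by (simp add: addv_def pos_def split: if_split; arith)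
  show "Omega (fX 1 n) = fB 1 (Omega n)"
    unfolding n_def fX_explicit map_upt_6 Omega_addv fB_def Omega_explicit UD_geoR_1
    by (simp add: addv_def pos_def split: if_split; arith)
  show "epsB 1 (Omega n) = epsX 1 n"
    unfolding n_def epsB_def epsX_explicit Omega_explicit pos_def by (simp; arith)
  show "wtB 1 (Omega n) = wtX 1 n"
    unfolding n_def wtB_def phiB_def epsB_def wtX_explicit Omega_explicit pos_def by (simp; arith)
qed

lemma Omega_crystal_2:
  fixes n0 n1 n2 n3 n4 n5 :: int
  defines "n \<equiv> [n0, n1, n2, n3, n4, n5]"
  shows "Omega (eX 2 n) = eB 2 (Omega n)" and "Omega (fX 2 n) = fB 2 (Omega n)"
    and "epsB 2 (Omega n) = epsX 2 n" and "wtB 2 (Omega n) = wtX 2 n"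
proof -
  have pos_half: "pos (2 * y) div 2 = max 0 y" for y :: int
    by (simp add: pos_def max_def)
  have b3_diff: "n3 - 2 * n4 - (2 * n2 - n3) = 2 * (n3 - n2 - n4)"
    and bb3_diff: "2 * n2 - n3 - (n3 - 2 * n4) = 2 * (n2 + n4 - n3)" by simp_all
  show "Omega (eX 2 n) = eB 2 (Omega n)"
    unfolding n_def eX_explicit map_upt_6 Omega_addv eB_def Omega_explicit UD_geoR_2
    by (simp add: addv_def split: if_split; arith)
  show "Omega (fX 2 n) = fB 2 (Omega n)"
    unfolding n_def fX_explicit map_upt_6 Omega_addv fB_def Omega_explicit UD_geoR_2
    by (simp add: addv_def split: if_split; arith)
  show "epsB 2 (Omega n) = epsX 2 n"
    unfolding n_def epsB_def epsX_explicit Omega_explicit nth6 b3_diff pos_half by (simp; arith)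
  show "wtB 2 (Omega n) = wtX 2 n"
    unfolding n_def wtB_def phiB_def epsB_def wtX_explicit Omega_explicit nth6 b3_diff bb3_diff pos_half
    by (simp; arith)
qed

theorem theorem6p1:
  shows "\<exists>\<Omega>. bij_betw \<Omega> Xset Binf \<and>
    (\<forall>i\<in>{0,1,2::nat}. \<forall>n\<in>Xset.
       \<Omega> (eX i n) = eB i (\<Omega> n) \<and>
       \<Omega> (fX i n) = fB i (\<Omega> n) \<and>
       epsB i (\<Omega> n) = epsX i n \<and>
       phiB i (\<Omega> n) = phiX i n \<and>
       wtB i (\<Omega> n) = wtX i n)"
proof -
  have "Omega (eX i n) = eB i (Omega n) \<and> Omega (fX i n) = fB i (Omega n) \<and>
      epsB i (Omega n) = epsX i n \<and> phiB i (Omega n) = phiX i n \<and> wtB i (Omega n) = wtX i n"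
    if "i \<in> {0, 1, 2}" and "n \<in> Xset" for i n
  proof -
    obtain n0 n1 n2 n3 n4 n5 where n: "n = [n0, n1, n2, n3, n4, n5]"
      using \<open>n \<in> Xset\<close> unfolding Xset_def by (blast elim: length_6_cases)
    have "phiB i b = epsB i b + wtB i b" for b
      by (simp add: wtB_def)
    then show ?thesis
      using \<open>i \<in> {0, 1, 2}\<close> Omega_crystal_0 Omega_crystal_1 Omega_crystal_2
      unfolding n phiX_def by auto
  qed
  with bij_betw_Omega show ?thesis
    by blast
qed

end
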